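(* Let $q\in\mathbb{R}$ and define on $(0,\pi/2)$ \[ A(x)=(\sin x-x\cos x)^2\cos x,\quad B(x)=x(\sin x-x\cos x)\sin^2x,\quad C(x)=-(2x^2\cos x-x\sin x-\cos x\sin^2x), \] and $g_1(x)=\dfrac{qB(x)-C(x)}{A(x)}$. Then (i) if $q\ge1$, $g_1$ is increasing on $(0,\pi/2)$ and $3q-\frac85<g_1(x)<\infty$ if $q>1$, while $3q-\frac85<g_1(x)<\frac{\pi^2}{4}-1$ if $q=1$; (ii) if $q\le\frac{34}{35}$, $g_1$ is decreasing on $(0,\pi/2)$ and $-\infty<g_1(x)<3q-\frac85$. *)

theory Defs
  imports Complex_Main
begin

definition fA :: "real \<Rightarrow> real" where
  "fA x = (sin x - x * cos x)^2 * cos x"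

definition fB :: "real \<Rightarrow> real" where
  "fB x = x * (sin x - x * cos x) * (sin x)^2"

definition fC :: "real \<Rightarrow> real" where
  "fC x = - (2 * x^2 * cos x - x * sin x - cos x * (sin x)^2)"

definition g1 :: "real \<Rightarrow> real \<Rightarrow> real" where
  "g1 q x = (q * fB x - fC x) / fA x"

end

theory Submission
  imports Defs "HOL-Analysis.Complex_Transcendental" "HOL-Real_Asymp.Real_Asymp"
begin

(* On (0, pi/2) the function g1 is affine in q: g1 q = g1_one + (q - 1) * g1_slope, where
   g1_slope = B/A and g1_one = g1 1.  Both g1_slope and g1_one increase, which gives the
   monotonicity for q >= 1.  For q <= 34/35 write
     g1 q = (g1_one - g1_slope/35) + (q - 34/35) * g1_slope
   and use that the first summand, g1 (34/35), decreases.  The three derivative signs reduce to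
   the positivity of explicit expressions in x, sin x and cos x, proved with Taylor bounds.
   As x -> 0+, g1_slope -> 3 and g1 1 -> 7/5, so g1 q -> 3q - 8/5, which by monotonicity is a
   strict bound; for q = 1 the upper bound pi^2/4 - 1 is the value at pi/2 of the continuous
   extension g1_one. *)

(* n counts the nonzero terms of the Maclaurin series, so sin_taylor n has degree 2n - 1. *)
definition sin_taylor :: "nat \<Rightarrow> real \<Rightarrow> real" where
  "sin_taylor n x = (\<Sum>k<n. (-1)^k * (x^(2*k+1) / fact (2*k+1)))"

definition cos_taylor :: "nat \<Rightarrow> real \<Rightarrow> real" where
  "cos_taylor n x = (\<Sum>k<n. (-1)^k * (x^(2*k) / fact (2*k)))"

lemma has_real_derivative_power_over_fact:
  "((\<lambda>x::real. x^Suc k / fact (Suc k)) has_real_derivative x^k / fact k) (at x)"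
proof -
  have "((\<lambda>x::real. x^Suc k / fact (Suc k)) has_real_derivative real (Suc k) * x^k / fact (Suc k)) (at x)"
    by (intro DERIV_cdivide) (use DERIV_pow[of "Suc k" x] in simp)
  then show ?thesis
    by (simp add: fact_Suc del: of_nat_Suc)
qed

lemma has_real_derivative_sin_taylor:
  "(sin_taylor n has_real_derivative cos_taylor n x) (at x)"
  unfolding sin_taylor_def cos_taylor_def
  by (intro DERIV_sum DERIV_cmult) (use has_real_derivative_power_over_fact[of "2*_"] in simp)

lemma cos_taylor_Suc_shift:
  "cos_taylor (Suc n) x = 1 - (\<Sum>k<n. (-1)^k * (x^Suc (Suc (2*k)) / fact (Suc (Suc (2*k)))))"
  unfolding cos_taylor_def sum.lessThan_Suc_shift by (simp add: sum_negf)

lemma sin_taylor_at_zero [simp]: "sin_taylor n 0 = 0"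
  by (simp add: sin_taylor_def)

lemma cos_taylor_Suc_at_zero [simp]: "cos_taylor (Suc n) 0 = 1"
  by (simp add: cos_taylor_Suc_shift)

lemma has_real_derivative_cos_taylor:
  "(cos_taylor (Suc n) has_real_derivative - sin_taylor n x) (at x)"
proof -
  have "((\<lambda>x. (-1)^k * (x^Suc (Suc (2*k)) / fact (Suc (Suc (2*k)))))
          has_real_derivative (-1)^k * (x^Suc (2*k) / fact (Suc (2*k)))) (at x)" for k
    by (intro DERIV_cmult has_real_derivative_power_over_fact)
  then have "((\<lambda>x. 1 - (\<Sum>k<n. (-1)^k * (x^Suc (Suc (2*k)) / fact (Suc (Suc (2*k))))))
      has_real_derivative 0 - (\<Sum>k<n. (-1)^k * (x^Suc (2*k) / fact (Suc (2*k))))) (at x)"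
    by (intro DERIV_diff DERIV_const DERIV_sum)
  then show ?thesis
    unfolding cos_taylor_Suc_shift[abs_def] by (simp add: sin_taylor_def)
qed

lemma has_real_derivative_sin_taylor_remainder:
  "((\<lambda>t. sin t - sin_taylor n t) has_real_derivative cos x - cos_taylor n x) (at x)"
  by (intro DERIV_diff DERIV_sin has_real_derivative_sin_taylor)

lemma has_real_derivative_cos_taylor_remainder:
  "((\<lambda>t. cos t - cos_taylor (Suc n) t) has_real_derivative - (sin x - sin_taylor n x)) (at x)"
  using DERIV_diff[OF DERIV_cos has_real_derivative_cos_taylor] by simp

lemma DERIV_nonneg_imp_nonneg:
  fixes f f' :: "real \<Rightarrow> real"
  assumes "f 0 = 0" "0 \<le> x"
    and "\<And>t. (f has_real_derivative f' t) (at t)" "\<And>t. 0 \<le> t \<Longrightarrow> 0 \<le> f' t"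
  shows "0 \<le> f x"
  using DERIV_nonneg_imp_nondecreasing[of 0 x f] assms by auto

lemma sin_cos_taylor_remainder_alternating:
  assumes "0 \<le> x"
  shows "0 \<le> (-1)^Suc n * (cos x - cos_taylor (Suc n) x)
    \<and> 0 \<le> (-1)^Suc n * (sin x - sin_taylor (Suc n) x)"
  using assms
proof (induction n arbitrary: x)
  case 0
  have cos: "0 \<le> (-1)^Suc 0 * (cos t - cos_taylor (Suc 0) t)" for t
    by (simp add: cos_taylor_def)
  have "0 \<le> (-1)^Suc 0 * (sin x - sin_taylor (Suc 0) x)"
    by (rule DERIV_nonneg_imp_nonneg[OF _ 0 DERIV_cmult[OF has_real_derivative_sin_taylor_remainder] cos])
       simp
  with cos show ?case by blast
next
  case (Suc n)
  have cos: "0 \<le> (-1)^Suc (Suc n) * (cos t - cos_taylor (Suc (Suc n)) t)" if "0 \<le> t" for t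
  proof (rule DERIV_nonneg_imp_nonneg[OF _ that DERIV_cmult[OF has_real_derivative_cos_taylor_remainder]])
    fix s :: real assume "0 \<le> s"
    with Suc.IH show "0 \<le> (-1)^Suc (Suc n) * - (sin s - sin_taylor (Suc n) s)"
      by (simp add: right_diff_distrib)
  qed simp
  have "0 \<le> (-1)^Suc (Suc n) * (sin x - sin_taylor (Suc (Suc n)) x)"
    by (rule DERIV_nonneg_imp_nonneg[OF _ Suc.prems DERIV_cmult[OF has_real_derivative_sin_taylor_remainder] cos])
       simp
  with cos Suc.prems show ?case by blast
qed

lemma sin_taylor_le_sin: "0 \<le> x \<Longrightarrow> even n \<Longrightarrow> 0 < n \<Longrightarrow> sin_taylor n x \<le> sin x"
  using sin_cos_taylor_remainder_alternating[of x "n - 1"] by simp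

lemma sin_le_sin_taylor: "0 \<le> x \<Longrightarrow> odd n \<Longrightarrow> sin x \<le> sin_taylor n x"
  using sin_cos_taylor_remainder_alternating[of x "n - 1"] by (simp add: odd_pos)

lemma cos_taylor_le_cos: "0 \<le> x \<Longrightarrow> even n \<Longrightarrow> 0 < n \<Longrightarrow> cos_taylor n x \<le> cos x"
  using sin_cos_taylor_remainder_alternating[of x "n - 1"] by simp

lemma cos_le_cos_taylor: "0 \<le> x \<Longrightarrow> odd n \<Longrightarrow> cos x \<le> cos_taylor n x"
  using sin_cos_taylor_remainder_alternating[of x "n - 1"] by (simp add: odd_pos)

lemma sin_cos_multiple_angles:
  fixes x :: real
  shows "sin (2 * x) = 2 * sin x * cos x"
    and "cos (2 * x) = cos x^2 - sin x^2"
    and "sin (3 * x) = 3 * sin x * cos x^2 - sin x^3"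
    and "cos (3 * x) = cos x^3 - 3 * sin x^2 * cos x"
    and "sin (4 * x) = 4 * sin x * cos x^3 - 4 * sin x^3 * cos x"
    and "cos (4 * x) = cos x^4 - 6 * sin x^2 * cos x^2 + sin x^4"
    and "sin (5 * x) = 5 * sin x * cos x^4 - 10 * sin x^3 * cos x^2 + sin x^5"
    and "cos (5 * x) = cos x^5 - 10 * sin x^2 * cos x^3 + 5 * sin x^4 * cos x"
proof -
  show s2: "sin (2 * x) = 2 * sin x * cos x" and c2: "cos (2 * x) = cos x^2 - sin x^2"
    by (rule sin_double cos_double)+
  have three: "3 * x = 2 * x + x" and four: "4 * x = 3 * x + x" and five: "5 * x = 4 * x + x"
    by simp_all
  show s3: "sin (3 * x) = 3 * sin x * cos x^2 - sin x^3"
    unfolding three sin_add s2 c2 by algebra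
  show c3: "cos (3 * x) = cos x^3 - 3 * sin x^2 * cos x"
    unfolding three cos_add s2 c2 by algebra
  show s4: "sin (4 * x) = 4 * sin x * cos x^3 - 4 * sin x^3 * cos x"
    unfolding four sin_add s3 c3 by algebra
  show c4: "cos (4 * x) = cos x^4 - 6 * sin x^2 * cos x^2 + sin x^4"
    unfolding four cos_add s3 c3 by algebra
  show "sin (5 * x) = 5 * sin x * cos x^4 - 10 * sin x^3 * cos x^2 + sin x^5"
    unfolding five sin_add s4 c4 by algebra
  show "cos (5 * x) = cos x^5 - 10 * sin x^2 * cos x^3 + 5 * sin x^4 * cos x"
    unfolding five cos_add s4 c4 by algebra
qed

lemma strict_mono_on_if_has_real_derivative_pos:
  fixes f f' :: "real \<Rightarrow> real"
  assumes "is_interval S"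
    and "\<And>x. x \<in> S \<Longrightarrow> (f has_real_derivative f' x) (at x)" "\<And>x. x \<in> S \<Longrightarrow> 0 < f' x"
  shows "strict_mono_on S f"
proof (rule strict_mono_onI)
  fix a b assume ab: "a \<in> S" "b \<in> S" "a < b"
  have S: "y \<in> S" if "a \<le> y" "y \<le> b" for y
    using assms(1) ab that unfolding is_interval_1 by blast
  show "f a < f b"
  proof (rule DERIV_pos_imp_increasing[OF ab(3)])
    fix y assume "a \<le> y" "y \<le> b"
    with S assms(2,3) show "\<exists>D. (f has_real_derivative D) (at y) \<and> 0 < D"
      by blast
  qed
qed

lemma strict_mono_on_tendsto_at_right_less:
  fixes f :: "real \<Rightarrow> real"
  assumes "strict_mono_on {a<..<b} f" "(f \<longlongrightarrow> L) (at_right a)" "x \<in> {a<..<b}"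
  shows "L < f x"
proof -
  define y where "y = (a + x) / 2"
  have y: "y \<in> {a<..<b}" "y < x"
    using assms(3) by (auto simp: y_def)
  have "eventually (\<lambda>z. z \<in> {a<..<y}) (at_right a)"
    using y by (intro eventually_at_right_real) auto
  then have "eventually (\<lambda>z. f z \<le> f y) (at_right a)"
    by eventually_elim (use y in \<open>auto intro!: less_imp_le strict_mono_onD[OF assms(1)]\<close>)
  then have "L \<le> f y"
    by (intro tendsto_upperbound[OF assms(2)]) simp_all
  also have "f y < f x"
    using y assms(3) by (intro strict_mono_onD[OF assms(1)])
  finally show ?thesis .
qed

lemma strict_antimono_on_tendsto_at_right_greater:
  fixes f :: "real \<Rightarrow> real"
  assumes "strict_antimono_on {a<..<b} f" "(f \<longlongrightarrow> L) (at_right a)" "x \<in> {a<..<b}"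
  shows "f x < L"
proof -
  have "strict_mono_on {a<..<b} (\<lambda>x. - f x)"
    using assms(1) by (auto simp: monotone_on_def)
  from strict_mono_on_tendsto_at_right_less[OF this tendsto_minus[OF assms(2)] assms(3)]
  show ?thesis by simp
qed

lemma sq_le_987_400_if_le_pi_half:
  assumes "0 \<le> x" "x \<le> pi/2"
  shows "x^2 \<le> 987/400"
proof -
  have "pi / 2 \<le> 3.1415926535899 / 2"
    using pi_approx(2) by simp
  then have "x \<le> 3.1415926535899 / 2"
    using assms(2) by linarith
  then have "x^2 \<le> (3.1415926535899 / 2)^2"
    using assms(1) by (intro power_mono) auto
  then show ?thesis
    by (simp add: power2_eq_square)
qed

definition g1_slope_num :: "real \<Rightarrow> real" where
  "g1_slope_num x = sin x * (sin x^2 * cos x + x * sin x - 2 * x^2 * cos x)"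

(* Each positivity proof below has the same shape: the expression is linearised into terms
   x^k sin (j x), x^k cos (j x); each of these is replaced by a Taylor polynomial bounding it from
   the appropriate side, and the resulting polynomial is x^m times a polynomial in y = x^2 with
   positive coefficients in the basis y^i (987/400 - y)^(n-i), where (pi/2)^2 <= 987/400. *)
lemma g1_slope_num_pos:
  assumes "0 < x" "x \<le> pi/2"
  shows "0 < g1_slope_num x"
proof -
  have y: "x^2 \<le> 987/400"
    using sq_le_987_400_if_le_pi_half assms by simp
  have "0 < x^7 * (256000/8767521 * (987/400 - x^2)^2 + 115760/3757509 * x^2 * (987/400 - x^2)
                 + 26044/131512815 * x^4)"
    using assms(1) y
    by (intro mult_pos_pos add_nonneg_pos add_nonneg_nonneg mult_nonneg_nonneg) simp_all
  also have "\<dots> = sin_taylor 4 (2*x) / 4 - sin_taylor 5 (4*x) / 8 + x / 2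
                  - x * cos_taylor 5 (2*x) / 2 - x^2 * sin_taylor 5 (2*x)"
    unfolding sin_taylor_def cos_taylor_def
    by (simp add: lessThan_nat_numeral fact_numeral divide_simps) algebra
  also have "\<dots> \<le> sin (2*x) / 4 - sin (4*x) / 8 + x / 2 - x * cos (2*x) / 2 - x^2 * sin (2*x)"
    using assms(1)
    by (intro add_mono diff_mono divide_right_mono mult_left_mono order_refl
          sin_taylor_le_sin sin_le_sin_taylor cos_le_cos_taylor) simp_all
  also have "\<dots> = g1_slope_num x"
    unfolding g1_slope_num_def sin_cos_multiple_angles
    using sin_cos_squared_add[of x] by algebra
  finally show ?thesis .
qed

definition g1_one_num :: "real \<Rightarrow> real" where
  "g1_one_num x = x * sin x * (5 + cos x^2) - 3 * sin x^2 * cos x - 3 * x^2 * cos x - 2 * x^3 * sin x"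

lemma g1_one_num_pos:
  assumes "0 < x" "x \<le> pi/2"
  shows "0 < g1_one_num x"
proof -
  have y: "x^2 \<le> 987/400"
    using sq_le_987_400_if_le_pi_half assms by simp
  have "0 < x^10 * (3276800000000/177030284589970623 * (987/400 - x^2)^5
      + 15036416000000/177030284589970623 * x^2 * (987/400 - x^2)^4
      + 101374400000000/649111043496558951 * x^4 * (987/400 - x^2)^3
      + 1860596116801613615/12961449316539289133568 * x^6 * (987/400 - x^2)^2
      + 17050283494159105321/259228986330785782671360 * x^8 * (987/400 - x^2)
      + 1172395797163035112793/97930950391630184564736000 * x^10)"
    using assms(1) y
    by (intro mult_pos_pos add_nonneg_pos add_nonneg_nonneg mult_nonneg_nonneg) simp_all
  also have "\<dots> = 3/4 * cos_taylor 8 (3*x) - 3/4 * cos_taylor 9 x + 21/4 * x * sin_taylor 8 x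
      + x * sin_taylor 8 (3*x) / 4 - 3 * x^2 * cos_taylor 9 x - 2 * x^3 * sin_taylor 9 x"
    unfolding sin_taylor_def cos_taylor_def
    by (simp add: lessThan_nat_numeral fact_numeral divide_simps) algebra
  also have "\<dots> \<le> 3/4 * cos (3*x) - 3/4 * cos x + 21/4 * x * sin x
      + x * sin (3*x) / 4 - 3 * x^2 * cos x - 2 * x^3 * sin x"
    using assms(1)
    by (intro add_mono diff_mono divide_right_mono mult_left_mono order_refl
          sin_taylor_le_sin sin_le_sin_taylor cos_taylor_le_cos cos_le_cos_taylor) simp_all
  also have "\<dots> = g1_one_num x"
    unfolding g1_one_num_def sin_cos_multiple_angles
    using sin_cos_squared_add[of x] by algebra
  finally show ?thesis .
qed

lemma g1_one_num_less_slope_num: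
  assumes "0 < x" "x \<le> pi/2"
  shows "35 * cos x^2 * g1_one_num x < (sin x - x * cos x) * g1_slope_num x"
proof -
  have y: "x^2 \<le> 987/400"
    using sq_le_987_400_if_le_pi_half assms by simp
  have "0 < x^12 * (5242880000000/413070664043264787 * (987/400 - x^2)^5
      + 204269158400000/4543777304475912657 * x^2 * (987/400 - x^2)^4
      + 3782604191334400/59069104958186864541 * x^4 * (987/400 - x^2)^3
      + 892624694250496/19689701652728954847 * x^6 * (987/400 - x^2)^2
      + 22351264943031430149282109/1406680171425375971087867904000 * x^8 * (987/400 - x^2)
      + 24708238666941861074769223/14066801714253759710878679040000 * x^10)"
    using assms(1) y
    by (intro mult_pos_pos add_nonneg_pos add_nonneg_nonneg mult_nonneg_nonneg) simp_all
  also have "\<dots> = 53/140 * cos_taylor 10 x - 27/140 * cos_taylor 11 (3*x) - 13/70 * cos_taylor 11 (5*x)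
      - 19/14 * x * sin_taylor 11 x - 81/56 * x * sin_taylor 11 (3*x) - 17/280 * x * sin_taylor 11 (5*x)
      + 78/35 * x^2 * cos_taylor 10 x + 27/35 * x^2 * cos_taylor 10 (3*x)
      + 18/35 * x^3 * sin_taylor 10 x + 18/35 * x^3 * sin_taylor 10 (3*x)"
    unfolding sin_taylor_def cos_taylor_def
    by (simp add: lessThan_nat_numeral fact_numeral divide_simps) algebra
  also have "\<dots> \<le> 53/140 * cos x - 27/140 * cos (3*x) - 13/70 * cos (5*x)
      - 19/14 * x * sin x - 81/56 * x * sin (3*x) - 17/280 * x * sin (5*x)
      + 78/35 * x^2 * cos x + 27/35 * x^2 * cos (3*x)
      + 18/35 * x^3 * sin x + 18/35 * x^3 * sin (3*x)"
    using assms(1)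
    by (intro add_mono diff_mono mult_left_mono order_refl
          sin_taylor_le_sin sin_le_sin_taylor cos_taylor_le_cos cos_le_cos_taylor) simp_all
  also have "\<dots> = ((sin x - x * cos x) * g1_slope_num x - 35 * cos x^2 * g1_one_num x) / 35"
    unfolding g1_slope_num_def g1_one_num_def sin_cos_multiple_angles
    using sin_cos_squared_add[of x] by algebra
  finally show ?thesis
    by simp
qed

lemma sin_minus_mult_cos_pos:
  assumes "0 < x" "x \<le> pi/2"
  shows "0 < sin x - x * cos x"
proof -
  have "x - x^3/6 \<le> sin x"
    using sin_taylor_le_sin[of x 2] assms
    by (simp add: sin_taylor_def lessThan_nat_numeral fact_numeral power_numeral_reduce)
  moreover have "x * cos x \<le> x * (1 - x^2/2 + x^4/24)"
    using cos_le_cos_taylor[of x 3] assms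
    by (intro mult_left_mono) (simp_all add: cos_taylor_def lessThan_nat_numeral fact_numeral)
  moreover have "0 < x^3 * (8 - x^2)"
    using sq_le_987_400_if_le_pi_half[of x] assms by (intro mult_pos_pos) auto
  ultimately show ?thesis
    by (simp add: algebra_simps power_numeral_reduce)
qed

definition g1_slope :: "real \<Rightarrow> real" where
  "g1_slope x = x * sin x^2 / (cos x * (sin x - x * cos x))"

(* Equal to g1 1 on (0, pi/2), but without the factor cos x that cancels between numerator and
   denominator, so it is continuous at pi/2, where g1 1 (pi/2) = 0 by division by zero. *)
definition g1_one :: "real \<Rightarrow> real" where
  "g1_one x = (x^2 * (1 + cos x^2) - sin x^2 - x * sin x * cos x) / (sin x - x * cos x)^2"

lemma g1_eq_g1_one_plus_slope:
  assumes "0 < x" "x < pi/2"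
  shows "g1 q x = g1_one x + (q - 1) * g1_slope x"
proof -
  have "cos x \<noteq> 0" "sin x - x * cos x \<noteq> 0"
    using cos_gt_zero[of x] sin_minus_mult_cos_pos[of x] assms by auto
  then show ?thesis
    unfolding g1_def fA_def fB_def fC_def g1_one_def g1_slope_def
    by (simp add: field_simps) (use sin_cos_squared_add[of x] in algebra)
qed

lemma has_real_derivative_sin_minus_mult_cos:
  "((\<lambda>x. sin x - x * cos x) has_real_derivative x * sin x) (at x)"
  by (auto intro!: derivative_eq_intros)

lemma has_real_derivative_g1_slope:
  assumes "0 < x" "x < pi/2"
  shows "(g1_slope has_real_derivative g1_slope_num x / (cos x^2 * (sin x - x * cos x)^2)) (at x)"
proof -
  have ct: "cos x * (sin x - x * cos x) \<noteq> 0"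
    using cos_gt_zero[of x] sin_minus_mult_cos_pos[of x] assms by auto
  have num: "((\<lambda>x. x * sin x^2) has_real_derivative sin x^2 + x * (2 * sin x * cos x)) (at x)"
    by (auto intro!: derivative_eq_intros)
  have den: "((\<lambda>x. cos x * (sin x - x * cos x)) has_real_derivative
      - sin x * (sin x - x * cos x) + x * sin x * cos x) (at x)"
    by (rule DERIV_mult[OF DERIV_cos has_real_derivative_sin_minus_mult_cos])
  have "(sin x^2 + x * (2 * sin x * cos x)) * (cos x * (sin x - x * cos x))
        - x * sin x^2 * (- sin x * (sin x - x * cos x) + x * sin x * cos x) = g1_slope_num x"
    unfolding g1_slope_num_def using sin_cos_squared_add[of x] by algebra
  with DERIV_divide[OF num den ct] show ?thesis
    unfolding g1_slope_def[abs_def] by (simp add: power2_eq_square mult_ac)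
qed

lemma has_real_derivative_g1_one:
  assumes "0 < x" "x \<le> pi/2"
  shows "(g1_one has_real_derivative g1_one_num x / (sin x - x * cos x)^3) (at x)"
proof -
  define t where "t = sin x - x * cos x"
  define N' where "N' = 2 * x * (1 + cos x^2) - 2 * x^2 * cos x * sin x - 2 * sin x * cos x
      - (sin x * cos x + x * cos x^2 - x * sin x^2)"
  have t: "t \<noteq> 0"
    using sin_minus_mult_cos_pos[of x] assms by (auto simp: t_def)
  have num: "((\<lambda>x. x^2 * (1 + cos x^2) - sin x^2 - x * sin x * cos x) has_real_derivative N') (at x)"
    unfolding N'_def by (auto intro!: derivative_eq_intros simp: algebra_simps power2_eq_square)
  have den: "((\<lambda>x. (sin x - x * cos x)^2) has_real_derivative 2 * (x * sin x * t)) (at x)"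
    using DERIV_power[OF has_real_derivative_sin_minus_mult_cos, where n = 2] by (simp add: t_def)
  have "N' * t^2 - (x^2 * (1 + cos x^2) - sin x^2 - x * sin x * cos x) * (2 * (x * sin x * t))
      = t * (N' * t - (x^2 * (1 + cos x^2) - sin x^2 - x * sin x * cos x) * (2 * (x * sin x)))"
    by (simp add: algebra_simps power2_eq_square)
  also have "\<dots> = t * g1_one_num x"
    unfolding g1_one_num_def N'_def t_def using sin_cos_squared_add[of x] by algebra
  finally have "(N' * t^2 - (x^2 * (1 + cos x^2) - sin x^2 - x * sin x * cos x) * (2 * (x * sin x * t)))
      / (t^2 * t^2) = g1_one_num x / t^3"
    using t by (simp add: power2_eq_square power3_eq_cube)
  with DERIV_divide[OF num den] t show ?thesis
    unfolding g1_one_def[abs_def] t_def by simp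
qed

lemma g1_slope_strict_mono_on: "strict_mono_on {0<..<pi/2} g1_slope"
proof (rule strict_mono_on_if_has_real_derivative_pos[OF _ has_real_derivative_g1_slope])
  fix x :: real assume "x \<in> {0<..<pi/2}"
  then show "0 < g1_slope_num x / (cos x^2 * (sin x - x * cos x)^2)"
    using g1_slope_num_pos[of x] cos_gt_zero[of x] sin_minus_mult_cos_pos[of x] by simp
qed auto

lemma g1_one_strict_mono_on: "strict_mono_on {0<..pi/2} g1_one"
proof (rule strict_mono_on_if_has_real_derivative_pos[OF _ has_real_derivative_g1_one])
  fix x :: real assume "x \<in> {0<..pi/2}"
  then show "0 < g1_one_num x / (sin x - x * cos x)^3"
    using g1_one_num_pos[of x] sin_minus_mult_cos_pos[of x] by simp
qed auto

lemma g1_one_minus_slope_strict_antimono_on: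
  "strict_antimono_on {0<..<pi/2} (\<lambda>x. g1_one x - g1_slope x / 35)"
proof -
  have mono: "strict_mono_on {0<..<pi/2} (\<lambda>x. g1_slope x / 35 - g1_one x)"
  proof (rule strict_mono_on_if_has_real_derivative_pos)
    fix x :: real assume x: "x \<in> {0<..<pi/2}"
    then have c: "0 < cos x" and t: "0 < sin x - x * cos x"
      using cos_gt_zero[of x] sin_minus_mult_cos_pos[of x] by auto
    show "((\<lambda>x. g1_slope x / 35 - g1_one x) has_real_derivative
        g1_slope_num x / (cos x^2 * (sin x - x * cos x)^2) / 35
        - g1_one_num x / (sin x - x * cos x)^3) (at x)"
      using x
      by (intro DERIV_diff DERIV_cdivide has_real_derivative_g1_slope has_real_derivative_g1_one) auto
    have "g1_one_num x / (sin x - x * cos x)^3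
        = 35 * cos x^2 * g1_one_num x / (35 * cos x^2 * (sin x - x * cos x)^3)"
      using c by simp
    also have "\<dots> < (sin x - x * cos x) * g1_slope_num x / (35 * cos x^2 * (sin x - x * cos x)^3)"
      using x c t g1_one_num_less_slope_num[of x] by (intro divide_strict_right_mono) auto
    also have "\<dots> = g1_slope_num x / (cos x^2 * (sin x - x * cos x)^2) / 35"
      using t by (simp add: power2_eq_square power3_eq_cube)
    finally show "0 < g1_slope_num x / (cos x^2 * (sin x - x * cos x)^2) / 35
        - g1_one_num x / (sin x - x * cos x)^3"
      by simp
  qed auto
  show ?thesis
  proof (rule monotone_onI)
    fix a b assume "a \<in> {0<..<pi/2}" "b \<in> {0<..<pi/2}" "a < b"
    from strict_mono_onD[OF mono this]
    show "g1_one b - g1_slope b / 35 < g1_one a - g1_slope a / 35"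
      by simp
  qed
qed

lemma g1_tendsto_at_right_0: "(g1 q \<longlongrightarrow> 3 * q - 8/5) (at_right 0)"
proof -
  have "(g1_slope \<longlongrightarrow> 3) (at_right 0)"
    unfolding g1_slope_def by real_asymp
  moreover have "(g1 1 \<longlongrightarrow> 7/5) (at_right 0)"
    unfolding g1_def fA_def fB_def fC_def by (real_asymp simp: power2_eq_square)
  ultimately have "((\<lambda>x. g1 1 x + (q - 1) * g1_slope x) \<longlongrightarrow> 7/5 + (q - 1) * 3) (at_right 0)"
    by (intro tendsto_intros)
  moreover have "eventually (\<lambda>x. x \<in> {0<..<pi/2}) (at_right 0)"
    by (intro eventually_at_right_real) simp
  then have "eventually (\<lambda>x. g1 1 x + (q - 1) * g1_slope x = g1 q x) (at_right 0)"
    by eventually_elim (simp add: g1_eq_g1_one_plus_slope)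
  ultimately show ?thesis
    by (auto simp: algebra_simps elim: Lim_transform_eventually)
qed

lemma g1_strict_mono_on: "1 \<le> q \<Longrightarrow> strict_mono_on {0<..<pi/2} (g1 q)"
proof (rule strict_mono_onI)
  fix a b assume q: "1 \<le> q" and ab: "a \<in> {0<..<pi/2}" "b \<in> {0<..<pi/2}" "a < b"
  have "g1_slope a < g1_slope b"
    using ab by (intro strict_mono_onD[OF g1_slope_strict_mono_on])
  then have "(q - 1) * g1_slope a \<le> (q - 1) * g1_slope b"
    using q by (intro mult_left_mono) auto
  moreover have "g1_one a < g1_one b"
    using ab strict_mono_onD[OF g1_one_strict_mono_on] by auto
  ultimately show "g1 q a < g1 q b"
    using ab g1_eq_g1_one_plus_slope[of _ q] by simp
qed

lemma g1_strict_antimono_on: "q \<le> 34/35 \<Longrightarrow> strict_antimono_on {0<..<pi/2} (g1 q)"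
proof (rule monotone_onI)
  fix a b assume q: "q \<le> 34/35" and ab: "a \<in> {0<..<pi/2}" "b \<in> {0<..<pi/2}" "a < b"
  have "g1_slope a < g1_slope b"
    using ab by (intro strict_mono_onD[OF g1_slope_strict_mono_on])
  then have "(q - 34/35) * g1_slope b \<le> (q - 34/35) * g1_slope a"
    using q by (intro mult_left_mono_neg) auto
  moreover have "g1_one b - g1_slope b / 35 < g1_one a - g1_slope a / 35"
    using ab monotone_onD[OF g1_one_minus_slope_strict_antimono_on] by auto
  moreover have "g1 q x = g1_one x - g1_slope x / 35 + (q - 34/35) * g1_slope x"
    if "x \<in> {0<..<pi/2}" for x
    using that g1_eq_g1_one_plus_slope[of x q] by (simp add: algebra_simps)
  ultimately show "g1 q b < g1 q a"
    using ab by simp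
qed

lemma g1_1_less: "x \<in> {0<..<pi/2} \<Longrightarrow> g1 1 x < pi^2/4 - 1"
  using strict_mono_onD[OF g1_one_strict_mono_on, of x "pi/2"] g1_eq_g1_one_plus_slope[of x 1]
  by (simp add: g1_one_def power_divide)

lemma g1_greater_limit: "1 \<le> q \<Longrightarrow> x \<in> {0<..<pi/2} \<Longrightarrow> 3 * q - 8/5 < g1 q x"
  by (rule strict_mono_on_tendsto_at_right_less[OF g1_strict_mono_on g1_tendsto_at_right_0])

lemma g1_less_limit: "q \<le> 34/35 \<Longrightarrow> x \<in> {0<..<pi/2} \<Longrightarrow> g1 q x < 3 * q - 8/5"
  by (rule strict_antimono_on_tendsto_at_right_greater[OF g1_strict_antimono_on g1_tendsto_at_right_0])

theorem lemma6:
  fixes q :: real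
  shows "(q \<ge> 1 \<longrightarrow>
            strict_mono_on {0<..<pi/2} (g1 q) \<and>
            (q > 1 \<longrightarrow> (\<forall>x\<in>{0<..<pi/2}. 3*q - 8/5 < g1 q x)) \<and>
            (q = 1 \<longrightarrow> (\<forall>x\<in>{0<..<pi/2}. 3*q - 8/5 < g1 q x \<and> g1 q x < pi^2/4 - 1)))
       \<and> (q \<le> 34/35 \<longrightarrow>
            strict_antimono_on {0<..<pi/2} (g1 q) \<and>
            (\<forall>x\<in>{0<..<pi/2}. g1 q x < 3*q - 8/5))"
proof (intro conjI impI)
  show "strict_mono_on {0<..<pi/2} (g1 q)" if "1 \<le> q"
    using that by (rule g1_strict_mono_on)
  show "\<forall>x\<in>{0<..<pi/2}. 3*q - 8/5 < g1 q x" if "1 \<le> q"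
    using that g1_greater_limit by blast
  show "\<forall>x\<in>{0<..<pi/2}. 3*q - 8/5 < g1 q x \<and> g1 q x < pi^2/4 - 1" if "q = 1"
    using that g1_greater_limit[of 1] g1_1_less by simp
  show "strict_antimono_on {0<..<pi/2} (g1 q)" if "q \<le> 34/35"
    using that by (rule g1_strict_antimono_on)
  show "\<forall>x\<in>{0<..<pi/2}. g1 q x < 3*q - 8/5" if "q \<le> 34/35"
    using that g1_less_limit by blast
qed

end
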